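(* Let $D$ be an oriented graph whose missing graph is a vertex-disjoint union of paths. Then every vertex of the dependency digraph $\Delta(D)$ has out-degree at most 2 and in-degree at most 2.
   Context: All digraphs are finite oriented graphs. $N^+(v)$ is the out-neighborhood; $N^{++}(v)$ is the set of vertices $w\notin N^+(v)\cup\{v\}$ with $u\to w$ for some $u\in N^+(v)$. A missing edge is a pair of distinct non-adjacent vertices; the missing graph is formed by the missing edges. For missing edges $\{x,y\},\{a,b\}$, $\{x,y\}$ loses to $\{a,b\}$ if the endpoints can be labelled so that $x\to a$, $b\notin N^+(x)\cup N^{++}(x)$, $y\to b$, $a\notin N^+(y)\cup N^{++}(y)$. The dependency digraph $\Delta(D)$ has the missing edges as vertices and an arc $(e,e')$ whenever $e$ loses to $e'$. *)

theory Defs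
  imports Main
begin

definition oriented_graph :: "'a set \<Rightarrow> ('a \<times> 'a) set \<Rightarrow> bool" where
  "oriented_graph V A \<longleftrightarrow> finite V \<and> A \<subseteq> V \<times> V \<and>
     (\<forall>x. (x, x) \<notin> A) \<and> (\<forall>x y. (x, y) \<in> A \<longrightarrow> (y, x) \<notin> A)"

definition out_nbhd :: "('a \<times> 'a) set \<Rightarrow> 'a \<Rightarrow> 'a set" where
  "out_nbhd A v = {w. (v, w) \<in> A}"

definition second_out_nbhd :: "('a \<times> 'a) set \<Rightarrow> 'a \<Rightarrow> 'a set" where
  "second_out_nbhd A v =
     {w. w \<notin> out_nbhd A v \<and> w \<noteq> v \<and> (\<exists>u \<in> out_nbhd A v. (u, w) \<in> A)}"

definition missing_edges :: "'a set \<Rightarrow> ('a \<times> 'a) set \<Rightarrow> 'a set set" where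
  "missing_edges V A =
     {{x, y} | x y. x \<in> V \<and> y \<in> V \<and> x \<noteq> y \<and> (x, y) \<notin> A \<and> (y, x) \<notin> A}"

text \<open>The missing graph (vertex set V, edge set the missing edges) is a vertex-disjoint
  union of paths: its edge set is the union of the edge sets of a family of pairwise
  vertex-disjoint paths (lists of distinct vertices), so every vertex lies on at most one
  path (vertices on no path are trivial paths).\<close>
definition path_edges :: "'a list \<Rightarrow> 'a set set" where
  "path_edges p = {{p ! i, p ! Suc i} | i. Suc i < length p}"

definition missing_graph_disjoint_paths :: "'a set \<Rightarrow> ('a \<times> 'a) set \<Rightarrow> bool" where
  "missing_graph_disjoint_paths V A \<longleftrightarrow>
     (\<exists>P :: 'a list set.
        (\<forall>p \<in> P. p \<noteq> [] \<and> distinct p \<and> set p \<subseteq> V) \<and>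
        (\<forall>p \<in> P. \<forall>q \<in> P. p \<noteq> q \<longrightarrow> set p \<inter> set q = {}) \<and>
        missing_edges V A = (\<Union>p \<in> P. path_edges p))"

definition loses_to :: "('a \<times> 'a) set \<Rightarrow> 'a set \<Rightarrow> 'a set \<Rightarrow> bool" where
  "loses_to A e e' \<longleftrightarrow>
     (\<exists>x y a b. e = {x, y} \<and> e' = {a, b} \<and>
        (x, a) \<in> A \<and> b \<notin> out_nbhd A x \<union> second_out_nbhd A x \<and>
        (y, b) \<in> A \<and> a \<notin> out_nbhd A y \<union> second_out_nbhd A y)"

definition dependency_arcs :: "'a set \<Rightarrow> ('a \<times> 'a) set \<Rightarrow> ('a set \<times> 'a set) set" where
  "dependency_arcs V A =
     {(e, e'). e \<in> missing_edges V A \<and> e' \<in> missing_edges V A \<and> loses_to A e e'}"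

definition dep_out_degree :: "'a set \<Rightarrow> ('a \<times> 'a) set \<Rightarrow> 'a set \<Rightarrow> nat" where
  "dep_out_degree V A e = card {e'. (e, e') \<in> dependency_arcs V A}"

definition dep_in_degree :: "'a set \<Rightarrow> ('a \<times> 'a) set \<Rightarrow> 'a set \<Rightarrow> nat" where
  "dep_in_degree V A e = card {e'. (e', e) \<in> dependency_arcs V A}"

end

theory Submission
  imports Defs
begin

text \<open>The missing edges that {x, y} loses to are exactly the pairs {a, b} with a an
  out-neighbour of x outside N+(y) \<union> N++(y) and b an out-neighbour of y outside
  N+(x) \<union> N++(x); dually for the edges losing to {a, b}. Every such pair is again a missing edge (an arc between a and b would put one of
  them into the second out-neighbourhood of x or y), so these edges form a complete bipartite
  subgraph of the missing graph. In a vertex-disjoint union of paths every vertex has degree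
  at most 2 and there is no 4-cycle, so a complete bipartite subgraph has at most two edges.\<close>

definition loss_heads :: "('a \<times> 'a) set \<Rightarrow> 'a \<Rightarrow> 'a \<Rightarrow> 'a set" where
  "loss_heads A x y = {a. (x, a) \<in> A \<and> a \<notin> out_nbhd A y \<union> second_out_nbhd A y}"

definition loss_tails :: "('a \<times> 'a) set \<Rightarrow> 'a \<Rightarrow> 'a \<Rightarrow> 'a set" where
  "loss_tails A a b = {x. (x, a) \<in> A \<and> b \<notin> out_nbhd A x \<union> second_out_nbhd A x}"

lemma loses_to_doubleton_source:
  assumes "loses_to A {x, y} e'"
  shows "e' \<in> {{a, b} | a b. a \<in> loss_heads A x y \<and> b \<in> loss_heads A y x}"
  using assms unfolding loses_to_def loss_heads_def doubleton_eq_iff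
  by (elim exE conjE disjE) (auto simp: insert_commute)

lemma loses_to_doubleton_target:
  assumes "loses_to A e {a, b}"
  shows "e \<in> {{x, y} | x y. x \<in> loss_tails A a b \<and> y \<in> loss_tails A b a}"
  using assms unfolding loses_to_def loss_tails_def doubleton_eq_iff
  by (elim exE conjE disjE) (auto simp: insert_commute)

lemma loss_heads_missing:
  assumes "oriented_graph V A" "(x, y) \<notin> A" "(y, x) \<notin> A"
    and "a \<in> loss_heads A x y" "b \<in> loss_heads A y x"
  shows "{a, b} \<in> missing_edges V A"
  using assms unfolding oriented_graph_def missing_edges_def loss_heads_def
    out_nbhd_def second_out_nbhd_def by blast

lemma loss_tails_missing:
  assumes "oriented_graph V A" "(a, b) \<notin> A" "(b, a) \<notin> A"
    and "x \<in> loss_tails A a b" "y \<in> loss_tails A b a"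
  shows "{x, y} \<in> missing_edges V A"
  using assms unfolding oriented_graph_def missing_edges_def loss_tails_def
    out_nbhd_def second_out_nbhd_def by blast

lemma finite_loss_heads:
  assumes "oriented_graph V A"
  shows "finite (loss_heads A x y)"
proof (rule finite_subset)
  show "loss_heads A x y \<subseteq> V" "finite V"
    using assms unfolding oriented_graph_def loss_heads_def by auto
qed

lemma finite_loss_tails:
  assumes "oriented_graph V A"
  shows "finite (loss_tails A a b)"
proof (rule finite_subset)
  show "loss_tails A a b \<subseteq> V" "finite V"
    using assms unfolding oriented_graph_def loss_tails_def by auto
qed

lemma missing_edge_non_adjacent:
  "{x, y} \<in> missing_edges V A \<Longrightarrow> (x, y) \<notin> A \<and> (y, x) \<notin> A"
  unfolding missing_edges_def by (auto simp: doubleton_eq_iff)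

lemma doubletons_eq_image: "{{s, t} | s t. s \<in> S \<and> t \<in> T} = (\<lambda>(s, t). {s, t}) ` (S \<times> T)"
  by auto

lemma finite_doubletons: "finite S \<Longrightarrow> finite T \<Longrightarrow> finite {{s, t} | s t. s \<in> S \<and> t \<in> T}"
  unfolding doubletons_eq_image by simp

lemma card_doubletons_le:
  assumes "finite S" "finite T"
  shows "card {{s, t} | s t. s \<in> S \<and> t \<in> T} \<le> card S * card T"
  unfolding doubletons_eq_image
  using card_image_le[of "S \<times> T"] assms by (simp add: card_cartesian_product)

lemma card_complete_bipartite_le_2:
  fixes M :: "'a set set"
  assumes degree: "\<And>v. finite {w. {v, w} \<in> M} \<and> card {w. {v, w} \<in> M} \<le> 2"
    and no_4_cycle: "\<And>s1 s2 t1 t2. s1 \<noteq> s2 \<Longrightarrow> t1 \<noteq> t2 \<Longrightarrow>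
      {s1, t1} \<in> M \<Longrightarrow> {s1, t2} \<in> M \<Longrightarrow> {s2, t1} \<in> M \<Longrightarrow> {s2, t2} \<in> M \<Longrightarrow> False"
    and "finite S" "finite T" and complete: "\<forall>s\<in>S. \<forall>t\<in>T. {s, t} \<in> M"
  shows "card {{s, t} | s t. s \<in> S \<and> t \<in> T} \<le> 2"
proof -
  have "card S * card T \<le> 2"
  proof (cases "S = {} \<or> T = {}")
    case True
    then show ?thesis by auto
  next
    case False
    then obtain s t where "s \<in> S" "t \<in> T" by blast
    have "T \<subseteq> {w. {s, w} \<in> M}" "S \<subseteq> {w. {t, w} \<in> M}"
      using complete \<open>s \<in> S\<close> \<open>t \<in> T\<close> by (auto simp: insert_commute)
    then have "card T \<le> 2" "card S \<le> 2"
      using degree card_mono by (metis le_trans)+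
    moreover have "card S \<le> 1 \<or> card T \<le> 1"
    proof (rule ccontr)
      assume "\<not> (card S \<le> 1 \<or> card T \<le> 1)"
      then obtain s1 s2 t1 t2 where "s1 \<in> S" "s2 \<in> S" "s1 \<noteq> s2" "t1 \<in> T" "t2 \<in> T" "t1 \<noteq> t2"
        using card_le_Suc0_iff_eq[OF \<open>finite S\<close>] card_le_Suc0_iff_eq[OF \<open>finite T\<close>] by auto
      with no_4_cycle[of s1 s2 t1 t2] complete show False by blast
    qed
    ultimately show ?thesis
      by (metis mult_le_mono mult.commute mult_1 le_trans nat_mult_1_right)
  qed
  then show ?thesis
    using card_doubletons_le[OF \<open>finite S\<close> \<open>finite T\<close>] by linarith
qed

locale vertex_disjoint_paths =
  fixes P :: "'a list set"
  assumes paths_distinct: "\<And>p. p \<in> P \<Longrightarrow> distinct p"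
    and paths_disjoint: "\<And>p q. p \<in> P \<Longrightarrow> q \<in> P \<Longrightarrow> p \<noteq> q \<Longrightarrow> set p \<inter> set q = {}"
begin

abbreviation edges :: "'a set set" where
  "edges \<equiv> \<Union>p \<in> P. path_edges p"

lemma edge_positions:
  assumes "{v, w} \<in> edges"
  obtains p i j where "p \<in> P" "i < length p" "j < length p" "p ! i = v" "p ! j = w"
    "j = Suc i \<or> i = Suc j"
proof -
  obtain p k where p: "p \<in> P" "Suc k < length p" "{v, w} = {p ! k, p ! Suc k}"
    using assms unfolding path_edges_def by blast
  then consider "v = p ! k" "w = p ! Suc k" | "v = p ! Suc k" "w = p ! k"
    by (auto simp: doubleton_eq_iff)
  then show ?thesis
    using p that[of p k "Suc k"] that[of p "Suc k" k] by cases auto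
qed

lemma edge_neighbour_on_path:
  assumes "p \<in> P" "i < length p" "p ! i = v" "{v, w} \<in> edges"
  obtains j where "j < length p" "p ! j = w" "j = Suc i \<or> i = Suc j"
proof -
  obtain q i' j where q: "q \<in> P" "i' < length q" "j < length q" "q ! i' = v" "q ! j = w"
    "j = Suc i' \<or> i' = Suc j"
    using edge_positions[OF assms(4)] by blast
  have "q = p"
    using paths_disjoint[OF q(1) assms(1)] q(2,4) assms(2,3) by (force simp: in_set_conv_nth)
  with q assms have "i' = i"
    using paths_distinct nth_eq_iff_index_eq by metis
  with q \<open>q = p\<close> show ?thesis using that by blast
qed

lemma edges_degree_le_2: "finite {w. {v, w} \<in> edges} \<and> card {w. {v, w} \<in> edges} \<le> 2"
proof (cases "\<exists>w. {v, w} \<in> edges")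
  case False
  then show ?thesis by simp
next
  case True
  then obtain p i where p: "p \<in> P" "i < length p" "p ! i = v"
    by (metis edge_positions)
  have "{w. {v, w} \<in> edges} \<subseteq> {p ! (i - 1), p ! Suc i}"
  proof
    fix w
    assume "w \<in> {w. {v, w} \<in> edges}"
    then obtain j where "p ! j = w" "j = Suc i \<or> i = Suc j"
      using edge_neighbour_on_path[OF p] by blast
    then show "w \<in> {p ! (i - 1), p ! Suc i}" by auto
  qed
  moreover have "card {p ! (i - 1), p ! Suc i} \<le> 2"
    by (simp add: card_insert_if)
  ultimately show ?thesis
    by (meson card_mono finite.emptyI finite.insertI finite_subset le_trans)
qed

text \<open>The two common neighbours of s1 and s2 are the predecessor and the successor of s1 on
  its path, and s2 lies next to both of them, so s2 = s1.\<close>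
lemma edges_no_4_cycle:
  assumes "s1 \<noteq> s2" "t1 \<noteq> t2"
    and "{s1, t1} \<in> edges" "{s1, t2} \<in> edges" "{s2, t1} \<in> edges" "{s2, t2} \<in> edges"
  shows False
proof -
  obtain p i j1 where p: "p \<in> P" "i < length p" "j1 < length p" "p ! i = s1" "p ! j1 = t1"
    and ij1: "j1 = Suc i \<or> i = Suc j1"
    using edge_positions[OF assms(3)] by blast
  obtain j2 where j2: "j2 < length p" "p ! j2 = t2" and ij2: "j2 = Suc i \<or> i = Suc j2"
    using edge_neighbour_on_path[OF p(1,2,4) assms(4)] by blast
  obtain i' where i': "i' < length p" "p ! i' = s2" and i'j1: "i' = Suc j1 \<or> j1 = Suc i'"
    using edge_neighbour_on_path[OF p(1,3,5)] assms(5) by (metis insert_commute)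
  obtain j2' where j2': "j2' < length p" "p ! j2' = t2" and i'j2': "j2' = Suc i' \<or> i' = Suc j2'"
    using edge_neighbour_on_path[OF p(1) i' assms(6)] by blast
  have "j2' = j2"
    using j2 j2' paths_distinct[OF p(1)] nth_eq_iff_index_eq by metis
  moreover have "j1 \<noteq> j2"
    using assms(2) p(5) j2(2) by blast
  ultimately have "i' = i"
    using ij1 ij2 i'j1 i'j2' by arith
  with assms(1) p(4) i'(2) show False by simp
qed

end

lemma missing_graph_complete_bipartite_card_le_2:
  assumes "missing_graph_disjoint_paths V A"
    and "finite S" "finite T" "\<forall>s\<in>S. \<forall>t\<in>T. {s, t} \<in> missing_edges V A"
  shows "card {{s, t} | s t. s \<in> S \<and> t \<in> T} \<le> 2"
proof -
  obtain P where "\<forall>p \<in> P. p \<noteq> [] \<and> distinct p \<and> set p \<subseteq> V"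
    and "\<forall>p \<in> P. \<forall>q \<in> P. p \<noteq> q \<longrightarrow> set p \<inter> set q = {}"
    and missing: "missing_edges V A = (\<Union>p \<in> P. path_edges p)"
    using assms(1) unfolding missing_graph_disjoint_paths_def by blast
  then interpret vertex_disjoint_paths P
    by unfold_locales auto
  show ?thesis
    using edges_degree_le_2 edges_no_4_cycle assms(2-4) unfolding missing
    by (rule card_complete_bipartite_le_2)
qed

lemma dep_out_degree_le_2:
  assumes "oriented_graph V A" "missing_graph_disjoint_paths V A"
    and "{x, y} \<in> missing_edges V A"
  shows "dep_out_degree V A {x, y} \<le> 2"
proof -
  let ?S = "loss_heads A x y" and ?T = "loss_heads A y x"
  have "finite ?S" "finite ?T"
    using finite_loss_heads[OF assms(1)] by blast+
  have "(x, y) \<notin> A" "(y, x) \<notin> A"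
    using missing_edge_non_adjacent[OF assms(3)] by auto
  then have "\<forall>a\<in>?S. \<forall>b\<in>?T. {a, b} \<in> missing_edges V A"
    using loss_heads_missing[OF assms(1)] by blast
  then have "card {{a, b} | a b. a \<in> ?S \<and> b \<in> ?T} \<le> 2"
    by (rule missing_graph_complete_bipartite_card_le_2[OF assms(2) \<open>finite ?S\<close> \<open>finite ?T\<close>])
  moreover have "{e'. ({x, y}, e') \<in> dependency_arcs V A} \<subseteq> {{a, b} | a b. a \<in> ?S \<and> b \<in> ?T}"
    unfolding dependency_arcs_def using loses_to_doubleton_source by fastforce
  ultimately show ?thesis
    unfolding dep_out_degree_def
    using card_mono[OF finite_doubletons[OF \<open>finite ?S\<close> \<open>finite ?T\<close>]] by (meson le_trans)
qed

lemma dep_in_degree_le_2: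
  assumes "oriented_graph V A" "missing_graph_disjoint_paths V A"
    and "{a, b} \<in> missing_edges V A"
  shows "dep_in_degree V A {a, b} \<le> 2"
proof -
  let ?S = "loss_tails A a b" and ?T = "loss_tails A b a"
  have "finite ?S" "finite ?T"
    using finite_loss_tails[OF assms(1)] by blast+
  have "(a, b) \<notin> A" "(b, a) \<notin> A"
    using missing_edge_non_adjacent[OF assms(3)] by auto
  then have "\<forall>x\<in>?S. \<forall>y\<in>?T. {x, y} \<in> missing_edges V A"
    using loss_tails_missing[OF assms(1)] by blast
  then have "card {{x, y} | x y. x \<in> ?S \<and> y \<in> ?T} \<le> 2"
    by (rule missing_graph_complete_bipartite_card_le_2[OF assms(2) \<open>finite ?S\<close> \<open>finite ?T\<close>])
  moreover have "{e. (e, {a, b}) \<in> dependency_arcs V A} \<subseteq> {{x, y} | x y. x \<in> ?S \<and> y \<in> ?T}"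
    unfolding dependency_arcs_def using loses_to_doubleton_target by fastforce
  ultimately show ?thesis
    unfolding dep_in_degree_def
    using card_mono[OF finite_doubletons[OF \<open>finite ?S\<close> \<open>finite ?T\<close>]] by (meson le_trans)
qed

theorem proposition4p4:
  fixes V :: "'a set" and A :: "('a \<times> 'a) set"
  assumes "oriented_graph V A"
    and "missing_graph_disjoint_paths V A"
  shows "\<forall>e \<in> missing_edges V A. dep_out_degree V A e \<le> 2 \<and> dep_in_degree V A e \<le> 2"
proof
  fix e
  assume e: "e \<in> missing_edges V A"
  then obtain x y where "e = {x, y}"
    unfolding missing_edges_def by blast
  with e show "dep_out_degree V A e \<le> 2 \<and> dep_in_degree V A e \<le> 2"
    using dep_out_degree_le_2[OF assms, of x y] dep_in_degree_le_2[OF assms, of x y] by simp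
qed

end
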